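(* Let $X$ be a Tychonoff space. If player II has a winning strategy in the game $\mathsf{G}_1(\Omega, \Omega)$ played on $X$, then $X_\delta$ is Lindelöf.
   Context: $\Omega$ is the collection of all open $\omega$-covers of $X$, i.e., open covers $\mathcal{C}$ such that every finite $F \subset X$ is contained in some member of $\mathcal{C}$ (here taken, as usual, with $X \notin \mathcal{C}$ not required). The game $\mathsf{G}_1(\Omega,\Omega)$ is played in innings $n \in \omega$: player I chooses $\mathcal{C}_n \in \Omega$, then player II chooses $C_n \in \mathcal{C}_n$; II wins iff $\{C_n : n \in \omega\} \in \Omega$. $X_\delta$, the $G_\delta$ modification of $X$, is the set $X$ with the topology generated by the $G_\delta$ subsets of $X$. *)

theory Defs
  imports "HOL-Analysis.Analysis"
begin

definition Tychonoff_space :: "'a topology \<Rightarrow> bool" where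
  "Tychonoff_space X \<equiv> completely_regular_space X \<and> Hausdorff_space X"

text \<open>Open omega-covers of X (X itself may be a member).\<close>
definition omega_cover :: "'a topology \<Rightarrow> 'a set set \<Rightarrow> bool" where
  "omega_cover X \<C> \<equiv> (\<forall>U\<in>\<C>. openin X U) \<and> \<Union>\<C> = topspace X \<and>
     (\<forall>F. finite F \<and> F \<subseteq> topspace X \<longrightarrow> (\<exists>U\<in>\<C>. F \<subseteq> U))"

text \<open>A strategy for player II in G_1(Omega,Omega): given the list of moves
  [C_0,...,C_n] of player I so far, it picks a member of the last move C_n.
  (Player II's own earlier moves are determined by the strategy, so this is
  the general perfect-information strategy.)\<close>
definition G1_Omega_strategy_II :: "'a topology \<Rightarrow> ('a set set list \<Rightarrow> 'a set) \<Rightarrow> bool" where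
  "G1_Omega_strategy_II X \<sigma> \<equiv>
     \<forall>hs. hs \<noteq> [] \<and> (\<forall>\<C>\<in>set hs. omega_cover X \<C>) \<longrightarrow> \<sigma> hs \<in> last hs"

definition G1_Omega_winning_II :: "'a topology \<Rightarrow> ('a set set list \<Rightarrow> 'a set) \<Rightarrow> bool" where
  "G1_Omega_winning_II X \<sigma> \<equiv> G1_Omega_strategy_II X \<sigma> \<and>
     (\<forall>\<C> :: nat \<Rightarrow> 'a set set. (\<forall>n. omega_cover X (\<C> n)) \<longrightarrow>
        omega_cover X (range (\<lambda>n. \<sigma> (map \<C> [0..<Suc n]))))"

definition II_wins_G1_Omega :: "'a topology \<Rightarrow> bool" where
  "II_wins_G1_Omega X \<equiv> (\<exists>\<sigma>. G1_Omega_winning_II X \<sigma>)"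

definition G_delta_modification :: "'a topology \<Rightarrow> 'a topology" where
  "G_delta_modification X \<equiv> topology_generated_by {S. gdelta_in X S}"

end

theory Submission
  imports Defs
begin

text \<open>
  Let \<open>\<sigma>\<close> be a winning strategy for II and cover \<open>X\<close> by \<open>G\<delta>\<close> sets, each point \<open>p\<close> lying in
  a member \<open>\<Inter>n. G p n\<close> of the cover with \<open>G p\<close> open and decreasing.  After any legal
  history \<open>s\<close> there is a finite set \<open>F s\<close> such that every open \<open>U \<supseteq> F s\<close> is the answer of
  \<open>\<sigma>\<close> to some \<open>\<omega>\<close>-cover: otherwise the open sets never answered, one around each finite
  set, would form an \<open>\<omega>\<close>-cover to which \<open>\<sigma>\<close> cannot respond.  For each \<open>k\<close> let player I
  answer \<open>s\<close> by a cover that \<open>\<sigma>\<close> answers with \<open>\<Union>p\<in>F s. G p k\<close>.  This gives a countably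
  branching tree of plays, hence countably many points \<open>p\<close>.  If some \<open>x\<close> escaped all the
  sets \<open>\<Inter>n. G p n\<close> for these \<open>p\<close>, then at every node some \<open>k\<close> would miss \<open>x\<close>, and the
  branch following these choices would be a play lost by \<open>\<sigma>\<close>.
\<close>

lemma generate_topology_on_Int_closed_basis:
  assumes "generate_topology_on \<S> U" and "\<And>A B. A \<in> \<S> \<Longrightarrow> B \<in> \<S> \<Longrightarrow> A \<inter> B \<in> \<S>"
    and "x \<in> U"
  shows "\<exists>A\<in>\<S>. x \<in> A \<and> A \<subseteq> U"
  using assms(1,3)
proof (induction arbitrary: x)
  case (Int a b)
  then obtain A B where "A \<in> \<S>" "x \<in> A" "A \<subseteq> a" "B \<in> \<S>" "x \<in> B" "B \<subseteq> b"
    by (meson IntD1 IntD2)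
  then show ?case using assms(2)[of A B] by blast
next
  case (UN K)
  then obtain k where "k \<in> K" "x \<in> k" by blast
  with UN.IH obtain A where "A \<in> \<S>" "x \<in> A" "A \<subseteq> k" by blast
  with \<open>k \<in> K\<close> show ?case by blast
qed auto

lemma Lindelof_space_G_delta_modificationI:
  assumes "\<And>\<W>. \<forall>W\<in>\<W>. gdelta_in X W \<Longrightarrow> topspace X \<subseteq> \<Union>\<W> \<Longrightarrow>
             \<exists>\<V>. countable \<V> \<and> \<V> \<subseteq> \<W> \<and> topspace X \<subseteq> \<Union>\<V>"
  shows "Lindelof_space (G_delta_modification X)"
  unfolding Lindelof_space_alt
proof (intro allI impI)
  let ?X\<delta> = "G_delta_modification X"
  fix \<U> assume \<U>: "(\<forall>U\<in>\<U>. openin ?X\<delta> U) \<and> topspace ?X\<delta> \<subseteq> \<Union>\<U>"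
  have top: "topspace ?X\<delta> = topspace X"
    unfolding G_delta_modification_def using gdelta_in_subset by fastforce
  define \<W> where "\<W> = {W. gdelta_in X W \<and> (\<exists>U\<in>\<U>. W \<subseteq> U)}"
  have "topspace X \<subseteq> \<Union>\<W>"
  proof
    fix x assume "x \<in> topspace X"
    then obtain U where U: "U \<in> \<U>" "x \<in> U" using \<U> top by blast
    then have "generate_topology_on {S. gdelta_in X S} U"
      using \<U> by (simp add: G_delta_modification_def openin_topology_generated_by_iff)
    then obtain A where "gdelta_in X A" "x \<in> A" "A \<subseteq> U"
      using generate_topology_on_Int_closed_basis[of _ U x] gdelta_in_Int U(2) by blast
    then show "x \<in> \<Union>\<W>" using U(1) unfolding \<W>_def by blast
  qed
  then obtain \<V> where \<V>: "countable \<V>" "\<V> \<subseteq> \<W>" "topspace X \<subseteq> \<Union>\<V>"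
    using assms[of \<W>] unfolding \<W>_def by blast
  have "\<forall>V\<in>\<V>. \<exists>U\<in>\<U>. V \<subseteq> U" using \<V>(2) unfolding \<W>_def by blast
  then obtain f where f: "\<And>V. V \<in> \<V> \<Longrightarrow> f V \<in> \<U> \<and> V \<subseteq> f V" by metis
  have "countable (f ` \<V>)" using \<V>(1) by simp
  moreover have "f ` \<V> \<subseteq> \<U>" using f by blast
  moreover have "topspace ?X\<delta> \<subseteq> \<Union>(f ` \<V>)" using \<V>(3) f top by blast
  ultimately show "\<exists>\<V>. countable \<V> \<and> \<V> \<subseteq> \<U> \<and> topspace ?X\<delta> \<subseteq> \<Union>\<V>" by blast
qed

lemma decseqs_eventually_avoid:
  assumes "finite F" and "\<And>p. p \<in> F \<Longrightarrow> decseq (G p)" and "\<And>p. p \<in> F \<Longrightarrow> x \<notin> (\<Inter>n. G p n)"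
  shows "\<exists>k. \<forall>p\<in>F. x \<notin> G p k"
  using assms
proof (induction F rule: finite_induct)
  case (insert q F)
  then obtain k where k: "\<forall>p\<in>F. x \<notin> G p k" by blast
  obtain l where l: "x \<notin> G q l" using insert.prems by blast
  have "\<forall>p\<in>insert q F. x \<notin> G p (max k l)"
    using k l insert.prems(1) decseqD[of _ k "max k l"] decseqD[of _ l "max k l"] by fastforce
  then show ?case by blast
qed simp

lemma G1_Omega_strategy_finite_kernel:
  assumes \<sigma>: "G1_Omega_strategy_II X \<sigma>" and s: "\<forall>\<C>\<in>set s. omega_cover X \<C>"
  shows "\<exists>F. finite F \<and> F \<subseteq> topspace X \<and>
           (\<forall>U. openin X U \<and> F \<subseteq> U \<longrightarrow> (\<exists>\<C>. omega_cover X \<C> \<and> \<sigma> (s @ [\<C>]) = U))"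
proof (rule ccontr)
  assume no_kernel: "\<not> ?thesis"
  have "\<exists>U. openin X U \<and> F \<subseteq> U \<and> (\<forall>\<C>. omega_cover X \<C> \<longrightarrow> \<sigma> (s @ [\<C>]) \<noteq> U)"
    if "finite F" "F \<subseteq> topspace X" for F
  proof -
    from no_kernel that
    have "\<not> (\<forall>U. openin X U \<and> F \<subseteq> U \<longrightarrow> (\<exists>\<C>. omega_cover X \<C> \<and> \<sigma> (s @ [\<C>]) = U))"
      by blast
    then show ?thesis by blast
  qed
  then obtain Uf where Uf: "\<And>F. finite F \<Longrightarrow> F \<subseteq> topspace X \<Longrightarrow>
      openin X (Uf F) \<and> F \<subseteq> Uf F \<and> (\<forall>\<C>. omega_cover X \<C> \<longrightarrow> \<sigma> (s @ [\<C>]) \<noteq> Uf F)"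
    by metis
  define \<C> where "\<C> = Uf ` {F. finite F \<and> F \<subseteq> topspace X}"
  have "\<forall>U\<in>\<C>. openin X U"
    unfolding \<C>_def using Uf by blast
  moreover have "\<forall>F. finite F \<and> F \<subseteq> topspace X \<longrightarrow> (\<exists>U\<in>\<C>. F \<subseteq> U)"
    unfolding \<C>_def using Uf by blast
  moreover have "\<Union>\<C> = topspace X"
  proof
    show "\<Union>\<C> \<subseteq> topspace X"
      using \<open>\<forall>U\<in>\<C>. openin X U\<close> openin_subset by blast
    show "topspace X \<subseteq> \<Union>\<C>"
      using \<open>\<forall>F. finite F \<and> F \<subseteq> topspace X \<longrightarrow> (\<exists>U\<in>\<C>. F \<subseteq> U)\<close>
      by (metis UnionI empty_subsetI finite.emptyI finite_insert insert_subset subsetI)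
  qed
  ultimately have \<C>_cover: "omega_cover X \<C>"
    unfolding omega_cover_def by blast
  then have "\<sigma> (s @ [\<C>]) \<in> \<C>"
    using \<sigma>[unfolded G1_Omega_strategy_II_def, rule_format, of "s @ [\<C>]"] s by simp
  then obtain F where "F \<in> {F. finite F \<and> F \<subseteq> topspace X}" "\<sigma> (s @ [\<C>]) = Uf F"
    unfolding \<C>_def by (rule imageE)
  then show False
    using Uf[of F] \<C>_cover by simp
qed

text \<open>
  Given a rule \<open>C\<close> that, after a history, offers a move for each index \<open>k\<close>, the node
  \<open>ks\<close> of the resulting countably branching tree is the history obtained by playing the
  indices of \<open>ks\<close> in reverse order (the most recent index comes first).
\<close>

primrec history :: "('c list \<Rightarrow> nat \<Rightarrow> 'c) \<Rightarrow> nat list \<Rightarrow> 'c list" where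
  "history C [] = []"
| "history C (k # ks) = history C ks @ [C (history C ks) k]"

lemma history_omega_covers:
  assumes "\<And>s k. \<forall>\<C>\<in>set s. omega_cover X \<C> \<Longrightarrow> omega_cover X (C s k)"
  shows "\<forall>\<C>\<in>set (history C ks). omega_cover X \<C>"
  by (induction ks) (auto simp: assms)

lemma G1_Omega_winning_branch_covers:
  assumes win: "G1_Omega_winning_II X \<sigma>"
    and C: "\<And>s k. \<forall>\<C>\<in>set s. omega_cover X \<C> \<Longrightarrow> omega_cover X (C s k)"
    and x: "x \<in> topspace X"
  shows "\<exists>ks. x \<in> \<sigma> (history C (\<kappa> ks # ks))"
proof -
  define branch where "branch = rec_nat [] (\<lambda>_ ks. \<kappa> ks # ks)"
  have branch_Suc: "branch (Suc n) = \<kappa> (branch n) # branch n" for n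
    by (simp add: branch_def)
  define play where "play n = C (history C (branch n)) (\<kappa> (branch n))" for n
  have history_branch: "history C (branch n) = map play [0..<n]" for n
    by (induction n) (simp_all add: branch_def play_def)
  have "omega_cover X (play n)" for n
    unfolding play_def using C history_omega_covers[where C = C, OF C] by blast
  then have "omega_cover X (range (\<lambda>n. \<sigma> (map play [0..<Suc n])))"
    using win unfolding G1_Omega_winning_II_def by blast
  then obtain n where "x \<in> \<sigma> (map play [0..<Suc n])"
    using x unfolding omega_cover_def by blast
  then have "x \<in> \<sigma> (history C (\<kappa> (branch n) # branch n))"
    by (simp add: history_branch play_def)
  then show ?thesis by blast
qed

lemma G1_Omega_strategy_answers_finite_unions:
  assumes \<sigma>: "G1_Omega_strategy_II X \<sigma>"
    and G_open: "\<And>p n. p \<in> topspace X \<Longrightarrow> openin X (G p n)"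
    and G_mem: "\<And>p n. p \<in> topspace X \<Longrightarrow> p \<in> G p n"
  obtains F C where
    "\<And>s. \<forall>\<C>\<in>set s. omega_cover X \<C> \<Longrightarrow> finite (F s) \<and> F s \<subseteq> topspace X"
    "\<And>s k. \<forall>\<C>\<in>set s. omega_cover X \<C> \<Longrightarrow>
       omega_cover X (C s k) \<and> \<sigma> (s @ [C s k]) = (\<Union>p\<in>F s. G p k)"
proof -
  obtain F where F: "\<And>s. \<forall>\<C>\<in>set s. omega_cover X \<C> \<Longrightarrow> finite (F s) \<and> F s \<subseteq> topspace X \<and>
      (\<forall>U. openin X U \<and> F s \<subseteq> U \<longrightarrow> (\<exists>\<C>. omega_cover X \<C> \<and> \<sigma> (s @ [\<C>]) = U))"
    using G1_Omega_strategy_finite_kernel[OF \<sigma>] by metis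
  have "\<exists>\<C>. omega_cover X \<C> \<and> \<sigma> (s @ [\<C>]) = (\<Union>p\<in>F s. G p k)"
    if "\<forall>\<C>\<in>set s. omega_cover X \<C>" for s k
  proof -
    have "openin X (\<Union>p\<in>F s. G p k)"
      using F[OF that] G_open by (intro openin_Union) blast
    moreover have "F s \<subseteq> (\<Union>p\<in>F s. G p k)"
      using F[OF that] G_mem by blast
    ultimately show ?thesis using F[OF that] by blast
  qed
  then obtain C where C: "\<And>s k. \<forall>\<C>\<in>set s. omega_cover X \<C> \<Longrightarrow>
      omega_cover X (C s k) \<and> \<sigma> (s @ [C s k]) = (\<Union>p\<in>F s. G p k)"
    by metis
  show ?thesis
    by (rule that[OF _ C]) (use F in blast)
qed

lemma G1_Omega_winning_countable_subcover:
  assumes win: "G1_Omega_winning_II X \<sigma>"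
    and G_open: "\<And>p n. p \<in> topspace X \<Longrightarrow> openin X (G p n)"
    and G_dec: "\<And>p. p \<in> topspace X \<Longrightarrow> decseq (G p)"
    and G_mem: "\<And>p n. p \<in> topspace X \<Longrightarrow> p \<in> G p n"
  shows "\<exists>D. countable D \<and> D \<subseteq> topspace X \<and> topspace X \<subseteq> (\<Union>p\<in>D. \<Inter>n. G p n)"
proof -
  have \<sigma>: "G1_Omega_strategy_II X \<sigma>"
    using win unfolding G1_Omega_winning_II_def by blast
  obtain F C where
    F: "\<And>s. \<forall>\<C>\<in>set s. omega_cover X \<C> \<Longrightarrow> finite (F s) \<and> F s \<subseteq> topspace X" and
    C: "\<And>s k. \<forall>\<C>\<in>set s. omega_cover X \<C> \<Longrightarrow>
       omega_cover X (C s k) \<and> \<sigma> (s @ [C s k]) = (\<Union>p\<in>F s. G p k)"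
    using G1_Omega_strategy_answers_finite_unions[where G = G, OF \<sigma> G_open G_mem] by blast
  have histories: "\<forall>\<C>\<in>set (history C ks). omega_cover X \<C>" for ks
    using history_omega_covers[where C = C] C by blast
  define D where "D = (\<Union>ks. F (history C ks))"
  have "countable D"
    unfolding D_def using F histories by (intro countable_UN) (auto intro: countable_finite)
  moreover have "D \<subseteq> topspace X"
    unfolding D_def using F histories by blast
  moreover have "topspace X \<subseteq> (\<Union>p\<in>D. \<Inter>n. G p n)"
  proof
    fix x assume x: "x \<in> topspace X"
    show "x \<in> (\<Union>p\<in>D. \<Inter>n. G p n)"
    proof (rule ccontr)
      assume x_escapes: "x \<notin> (\<Union>p\<in>D. \<Inter>n. G p n)"
      have "\<exists>k. \<forall>p\<in>F (history C ks). x \<notin> G p k" for ks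
      proof (rule decseqs_eventually_avoid)
        show "finite (F (history C ks))" using F[OF histories] by blast
        show "decseq (G p)" if "p \<in> F (history C ks)" for p
          using G_dec F[OF histories] that by blast
        show "x \<notin> (\<Inter>n. G p n)" if "p \<in> F (history C ks)" for p
          using x_escapes that unfolding D_def by blast
      qed
      then obtain \<kappa> where \<kappa>: "\<And>ks. \<forall>p\<in>F (history C ks). x \<notin> G p (\<kappa> ks)" by metis
      obtain ks where "x \<in> \<sigma> (history C (\<kappa> ks # ks))"
        using G1_Omega_winning_branch_covers[OF win _ x] C by blast
      then show False using \<kappa>[of ks] C histories by simp
    qed
  qed
  ultimately show ?thesis by blast
qed

lemma G1_Omega_winning_gdelta_countable_subcover:
  assumes win: "G1_Omega_winning_II X \<sigma>"
    and gdelta: "\<forall>W\<in>\<W>. gdelta_in X W" and cover: "topspace X \<subseteq> \<Union>\<W>"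
  shows "\<exists>\<V>. countable \<V> \<and> \<V> \<subseteq> \<W> \<and> topspace X \<subseteq> \<Union>\<V>"
proof -
  have "\<forall>p\<in>topspace X. \<exists>W\<in>\<W>. p \<in> W" using cover by blast
  then obtain W where W: "\<And>p. p \<in> topspace X \<Longrightarrow> W p \<in> \<W> \<and> p \<in> W p" by metis
  have "\<exists>G. (\<forall>n. openin X (G n)) \<and> (\<forall>n. G (Suc n) \<subseteq> G n) \<and> \<Inter>(range G) = W p"
    if "p \<in> topspace X" for p
    using W[OF that] gdelta gdelta_in_descending by blast
  then obtain G where G: "\<And>p. p \<in> topspace X \<Longrightarrow>
      (\<forall>n. openin X (G p n)) \<and> (\<forall>n. G p (Suc n) \<subseteq> G p n) \<and> \<Inter>(range (G p)) = W p"
    by metis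
  have G_open: "openin X (G p n)" and G_dec: "decseq (G p)" and "p \<in> \<Inter>(range (G p))"
    if "p \<in> topspace X" for p n
    using G[OF that] W[OF that] by (auto intro: decseq_SucI)
  then have G_mem: "p \<in> G p n" if "p \<in> topspace X" for p n
    using that by blast
  obtain D where D: "countable D" "D \<subseteq> topspace X" "topspace X \<subseteq> (\<Union>p\<in>D. \<Inter>n. G p n)"
    using G1_Omega_winning_countable_subcover[OF win G_open G_dec G_mem] by blast
  have "countable (W ` D)" using D(1) by simp
  moreover have "W ` D \<subseteq> \<W>" using D(2) W by blast
  moreover have "topspace X \<subseteq> \<Union>(W ` D)"
  proof -
    have "(\<Inter>n. G p n) = W p" if "p \<in> D" for p using G D(2) that by blast
    then show ?thesis using D(3) by auto
  qed
  ultimately show ?thesis by blast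
qed

theorem proposition3p5:
  fixes X :: "'a topology"
  assumes "Tychonoff_space X"
    and "II_wins_G1_Omega X"
  shows "Lindelof_space (G_delta_modification X)"
proof -
  obtain \<sigma> where win: "G1_Omega_winning_II X \<sigma>"
    using assms(2) unfolding II_wins_G1_Omega_def by blast
  show ?thesis
    by (rule Lindelof_space_G_delta_modificationI)
      (rule G1_Omega_winning_gdelta_countable_subcover[OF win])
qed

end
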